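(* Let $n\ge 1$ and let $\mathcal P(n,1,1)$ be the set of lattice paths with steps $(1,1)$ (up) and $(1,-1)$ (down) from $(0,0)$ to $(2n+1,1)$. (1) For each $k=1,2,\dots,n+1$, the number of paths in $\mathcal P(n,1,1)$ that start with an up step and have exactly $k$ up steps starting on or below the $x$-axis is $\frac{1}{n+1}\binom{2n}{n}$. (2) For each $k=1,2,\dots,n$, the number of paths in $\mathcal P(n,1,1)$ that start with a down step and have exactly $k$ down steps starting on or below the $x$-axis is $\frac{1}{n}\binom{2n}{n-1}$. (3) For each $k=1,2,\dots,2n+1$, the number of paths in $\mathcal P(n,1,1)$ with exactly $k$ vertices on or below the $x$-axis is $\frac{1}{2n+1}\binom{2n+1}{n}$.
   Context: A step starts on or below the $x$-axis if its initial vertex has $y$-coordinate $\le 0$. A vertex is on or below the $x$-axis if its $y$-coordinate is $\le 0$ (the final vertex, at height $1$, is never counted). *)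

theory Defs
  imports Complex_Main
begin

text \<open>A lattice path is a list of steps: True = up step (1,1), False = down step (1,-1).
  The path starts at (0,0); vertex i (0 <= i <= length p) is at (i, height p i).\<close>

definition step_val :: "bool \<Rightarrow> int" where
  "step_val b = (if b then 1 else -1)"

definition height :: "bool list \<Rightarrow> nat \<Rightarrow> int" where
  "height p i = (\<Sum>j<i. step_val (p ! j))"

definition paths :: "nat \<Rightarrow> bool list set" where
  "paths n = {p. length p = 2 * n + 1 \<and> height p (length p) = 1}"

definition low_ups :: "bool list \<Rightarrow> nat" where
  "low_ups p = card {i. i < length p \<and> p ! i \<and> height p i \<le> 0}"

definition low_downs :: "bool list \<Rightarrow> nat" where
  "low_downs p = card {i. i < length p \<and> \<not> p ! i \<and> height p i \<le> 0}"

definition low_vertices :: "bool list \<Rightarrow> nat" where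
  "low_vertices p = card {i. i < length p \<and> height p i \<le> 0}"

end

(*
  A cycle-lemma argument. Fix a class of steps: up steps, down steps, or all steps (the
  latter counting vertices). Rotating a path p that ends at height 1 so that it starts at
  position j, a vertex falls weakly below the new axis iff in p it lies strictly below the
  vertex j, or at the same height and not before j. Hence the number of low steps of the
  class in the rotation is the rank of j among the steps of the class ordered by height,
  ties broken by decreasing position, and every value from 1 to the number of such steps
  is attained by exactly one rotation starting with a step of the class. Double counting
  the pairs (path, rotation) shows that the paths starting with a step of the class and
  having exactly k low steps form a 1/(2n+1) fraction of all binom(2n+1, n) paths.
*)

theory Submission
  imports Defs
begin

lemma rotate_minus_rotate: "length p = L \<Longrightarrow> j \<le> L \<Longrightarrow> rotate (L - j) (rotate j p) = p"
  by (simp add: rotate_rotate)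

lemma rotate_rotate_minus: "length p = L \<Longrightarrow> j \<le> L \<Longrightarrow> rotate j (rotate (L - j) p) = p"
  by (simp add: rotate_rotate)

lemma hd_rotate_less: "j < length p \<Longrightarrow> hd (rotate j p) = p ! j"
  using hd_rotate_conv_nth[of p j] by (cases p) auto

lemma height_0 [simp]: "height p 0 = 0"
  by (simp add: height_def)

lemma height_Suc: "height p (Suc i) = height p i + step_val (p ! i)"
  by (simp add: height_def)

lemma height_append:
  "height (xs @ ys) i =
     (if i \<le> length xs then height xs i else height xs (length xs) + height ys (i - length xs))"
proof (induction i)
  case (Suc i)
  then show ?case
    by (cases "i < length xs") (auto simp: height_Suc nth_append Suc_diff_le not_less)
qed simp

lemma height_take: "i \<le> j \<Longrightarrow> height (take j p) i = height p i"
  by (induction i) (simp_all add: height_Suc)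

lemma height_drop: "j \<le> length p \<Longrightarrow> height (drop j p) i = height p (j + i) - height p j"
  by (induction i) (simp_all add: height_Suc)

lemma height_rotate:
  assumes "j < length p" "i \<le> length p"
  shows "height (rotate j p) i =
           (if j + i < length p then height p (j + i) - height p j
            else height p (j + i - length p) + height p (length p) - height p j)"
  using assms
  by (cases "j + i = length p")
     (auto simp: rotate_drop_take height_append height_take height_drop add.commute)

lemma height_length_rotate: "height (rotate j p) (length p) = height p (length p)"
proof (cases "p = []")
  case False
  then have "j mod length p < length p"
    by simp
  then show ?thesis
    using height_rotate[of "j mod length p" p "length p"] rotate_conv_mod[of j p]
    by (cases "j mod length p = 0") auto
qed simp

lemma height_length_eq:
  "height p (length p) = 2 * int (card {r. r < length p \<and> p ! r}) - int (length p)"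
proof -
  have "step_val b = 2 * of_bool b - 1" for b
    by (simp add: step_val_def)
  then have "height p (length p) = (\<Sum>r<length p. 2 * of_bool (p ! r) - 1)"
    by (simp add: height_def)
  also have "\<dots> = 2 * int (card ({..<length p} \<inter> {r. p ! r})) - int (length p)"
    by (simp add: sum_subtractf sum_distrib_left[symmetric])
  finally show ?thesis
    by (simp add: Int_def conj_commute)
qed

lemma mod_less_double: "a < 2 * L \<Longrightarrow> (a::nat) mod L = (if a < L then a else a - L)"
  by (simp add: le_mod_geq)

lemma bij_betw_add_mod: "j < L \<Longrightarrow> bij_betw (\<lambda>i. (j + i) mod L) {..<L} {..<(L::nat)}"
  by (rule bij_betw_byWitness[where f' = "\<lambda>r. (r + L - j) mod L"]) (auto simp: mod_less_double)

lemma card_Collect_add_mod: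
  "j < L \<Longrightarrow> card {i. i < L \<and> Q ((j + i) mod L)} = card {r. r < (L::nat) \<and> Q r}"
proof -
  assume "j < L"
  have "bij_betw (\<lambda>i. (j + i) mod L) {i \<in> {..<L}. Q ((j + i) mod L)} {r \<in> {..<L}. Q r}"
    by (rule bij_betw_Collect[OF bij_betw_add_mod[OF \<open>j < L\<close>]]) simp
  then show ?thesis
    by (simp add: bij_betw_same_card)
qed

lemma bij_betw_card_fiber_eq_1:
  assumes "bij_betw f A B" "b \<in> B"
  shows "card {a \<in> A. f a = b} = 1"
proof -
  have "{a \<in> A. f a = b} = {inv_into A f b}"
    using assms by (auto simp: bij_betw_def inj_on_eq_iff inv_into_into f_inv_into_f)
  then show ?thesis
    by simp
qed

definition rank_by :: "('b \<Rightarrow> 'a::linorder) \<Rightarrow> 'b set \<Rightarrow> 'b::linorder \<Rightarrow> nat" where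
  "rank_by h J j = card {r \<in> J. h r < h j \<or> (h r = h j \<and> j \<le> r)}"

lemma bij_betw_rank_by:
  assumes "finite J"
  shows "bij_betw (rank_by h J) J {1..card J}"
proof -
  let ?below = "\<lambda>j. {r \<in> J. h r < h j \<or> (h r = h j \<and> j \<le> r)}"
  have less: "rank_by h J j < rank_by h J j'"
    if "j \<in> J" "j' \<in> J" "j \<noteq> j'" "j \<in> ?below j'" for j j'
  proof -
    have "?below j \<subset> ?below j'"
      using that by auto
    then show ?thesis
      unfolding rank_by_def using assms by (intro psubset_card_mono) auto
  qed
  have inj: "inj_on (rank_by h J) J"
  proof (rule inj_onI, rule ccontr)
    fix j j' assume "j \<in> J" "j' \<in> J" "rank_by h J j = rank_by h J j'" "j \<noteq> j'"
    then show False
      using less[of j j'] less[of j' j] by force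
  qed
  have "rank_by h J j \<in> {1..card J}" if "j \<in> J" for j
  proof -
    have "0 < card (?below j)"
      using assms that by (subst card_gt_0_iff) auto
    moreover have "card (?below j) \<le> card J"
      using assms by (intro card_mono) auto
    ultimately show ?thesis
      unfolding rank_by_def by simp
  qed
  then have "rank_by h J ` J \<subseteq> {1..card J}"
    by blast
  moreover have "card (rank_by h J ` J) = card {1..card J}"
    using inj by (simp add: card_image)
  ultimately show ?thesis
    using inj by (simp add: bij_betw_def card_subset_eq)
qed

definition low_steps :: "(bool \<Rightarrow> bool) \<Rightarrow> bool list \<Rightarrow> nat" where
  "low_steps P p = card {i. i < length p \<and> P (p ! i) \<and> height p i \<le> 0}"

lemma low_ups_eq: "low_ups = low_steps (\<lambda>b. b)"
  by (simp add: fun_eq_iff low_ups_def low_steps_def)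

lemma low_downs_eq: "low_downs = low_steps Not"
  by (simp add: fun_eq_iff low_downs_def low_steps_def)

lemma low_vertices_eq: "low_vertices = low_steps (\<lambda>_. True)"
  by (simp add: fun_eq_iff low_vertices_def low_steps_def)

(* Positions before j are visited after the wrap-around, which adds the total rise 1. *)
lemma height_rotate_nonpos_iff:
  assumes "height p (length p) = 1" "j < length p" "i < length p"
  defines "r \<equiv> (j + i) mod length p"
  shows "height (rotate j p) i \<le> 0 \<longleftrightarrow>
           height p r < height p j \<or> (height p r = height p j \<and> j \<le> r)"
  using assms height_rotate[of j p i] by (auto simp: mod_less_double)

lemma low_steps_rotate:
  assumes "height p (length p) = 1" "j < length p"
  shows "low_steps P (rotate j p) = rank_by (height p) {r. r < length p \<and> P (p ! r)} j"
proof -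
  define Q where
    "Q r \<longleftrightarrow> P (p ! r) \<and> (height p r < height p j \<or> (height p r = height p j \<and> j \<le> r))" for r
  have "low_steps P (rotate j p) = card {i. i < length p \<and> Q ((j + i) mod length p)}"
    unfolding low_steps_def Q_def
    using assms height_rotate_nonpos_iff[OF assms]
    by (intro arg_cong[where f = card]) (auto simp: nth_rotate)
  also have "\<dots> = card {r. r < length p \<and> Q r}"
    using assms(2) by (rule card_Collect_add_mod)
  finally show ?thesis
    unfolding rank_by_def Q_def by (simp add: conj_assoc)
qed

lemma card_bool_lists_count_True:
  "card {p. length p = L \<and> card {r. r < L \<and> p ! r} = u} = L choose u"
proof -
  have "bij_betw (\<lambda>p. {r. r < L \<and> p ! r})
          {p. length p = L \<and> card {r. r < L \<and> p ! r} = u} {B. B \<subseteq> {..<L} \<and> card B = u}"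
  proof (rule bij_betw_byWitness[where f' = "\<lambda>B. map (\<lambda>i. i \<in> B) [0..<L]"])
    have "{r. r < L \<and> map (\<lambda>i. i \<in> B) [0..<L] ! r} = B" if "B \<subseteq> {..<L}" for B
      using that by auto
    then show "(\<lambda>B. map (\<lambda>i. i \<in> B) [0..<L]) ` {B. B \<subseteq> {..<L} \<and> card B = u}
                 \<subseteq> {p. length p = L \<and> card {r. r < L \<and> p ! r} = u}"
      by auto
  qed (auto intro: nth_equalityI)
  then show ?thesis
    by (simp add: bij_betw_same_card n_subsets)
qed

lemma paths_eq_count_ups:
  "paths n = {p. length p = 2 * n + 1 \<and> card {r. r < 2 * n + 1 \<and> p ! r} = n + 1}"
  unfolding paths_def by (auto simp: height_length_eq)

lemma card_paths: "card (paths n) = (2 * n + 1) choose n"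
  using binomial_symmetric[of n "2 * n + 1"]
  by (simp add: paths_eq_count_ups card_bool_lists_count_True)

lemma card_ups_path: "p \<in> paths n \<Longrightarrow> card {r. r < 2 * n + 1 \<and> p ! r} = n + 1"
  by (simp add: paths_eq_count_ups)

lemma card_downs_path: "p \<in> paths n \<Longrightarrow> card {r. r < 2 * n + 1 \<and> \<not> p ! r} = n"
proof -
  assume "p \<in> paths n"
  have "{r. r < 2 * n + 1 \<and> \<not> p ! r} = {..<2 * n + 1} - {r. r < 2 * n + 1 \<and> p ! r}"
    by auto
  also have "card \<dots> = (2 * n + 1) - card {r. r < 2 * n + 1 \<and> p ! r}"
    by (subst card_Diff_subset) auto
  finally show ?thesis
    using card_ups_path[OF \<open>p \<in> paths n\<close>] by simp
qed

lemma length_paths: "p \<in> paths n \<Longrightarrow> length p = 2 * n + 1"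
  by (simp add: paths_def)

lemma rotate_in_paths: "p \<in> paths n \<Longrightarrow> rotate j p \<in> paths n"
  unfolding paths_def using height_length_rotate[of j p] by auto

lemma card_rotations_low_steps_eq:
  assumes "height p (length p) = 1" "k \<in> {1..card {r. r < length p \<and> P (p ! r)}}"
  shows "card {j. j < length p \<and> P (p ! j) \<and> low_steps P (rotate j p) = k} = 1"
proof -
  let ?J = "{r. r < length p \<and> P (p ! r)}"
  have "{j. j < length p \<and> P (p ! j) \<and> low_steps P (rotate j p) = k}
          = {j \<in> ?J. rank_by (height p) ?J j = k}"
    using low_steps_rotate[OF assms(1)] by auto
  then show ?thesis
    using bij_betw_card_fiber_eq_1[OF bij_betw_rank_by assms(2)] by simp
qed

lemma bij_betw_rotate_pairs:
  "bij_betw (\<lambda>(p, j). (rotate j p, j))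
     (SIGMA p:paths n. {j. j < 2 * n + 1 \<and> \<Phi> (rotate j p)})
     ({q \<in> paths n. \<Phi> q} \<times> {..<2 * n + 1})"
proof (rule bij_betw_byWitness[where f' = "\<lambda>(q, j). (rotate (2 * n + 1 - j) q, j)"])
  show "(\<lambda>(p, j). (rotate j p, j)) ` (SIGMA p:paths n. {j. j < 2 * n + 1 \<and> \<Phi> (rotate j p)})
          \<subseteq> {q \<in> paths n. \<Phi> q} \<times> {..<2 * n + 1}"
    by (auto simp: rotate_in_paths)
  show "(\<lambda>(q, j). (rotate (2 * n + 1 - j) q, j)) ` ({q \<in> paths n. \<Phi> q} \<times> {..<2 * n + 1})
          \<subseteq> (SIGMA p:paths n. {j. j < 2 * n + 1 \<and> \<Phi> (rotate j p)})"
    by (auto simp: rotate_in_paths rotate_rotate_minus length_paths)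
qed (auto simp: rotate_minus_rotate rotate_rotate_minus length_paths)

lemma card_low_steps_hd_mult_length:
  assumes "\<forall>p \<in> paths n. card {r. r < 2 * n + 1 \<and> P (p ! r)} = m" "k \<in> {1..m}"
  shows "card {q \<in> paths n. P (hd q) \<and> low_steps P q = k} * (2 * n + 1) = card (paths n)"
proof -
  let ?\<Phi> = "\<lambda>q. P (hd q) \<and> low_steps P q = k"
  define T where "T = (SIGMA p:paths n. {j. j < 2 * n + 1 \<and> ?\<Phi> (rotate j p)})"
  have "finite (paths n)"
    by (rule finite_subset[OF _ finite_lists_length_eq[of UNIV "2 * n + 1"]]) (auto simp: paths_def)
  moreover have "card {j. j < 2 * n + 1 \<and> ?\<Phi> (rotate j p)} = 1" if "p \<in> paths n" for p
  proof -
    have "length p = 2 * n + 1" "height p (length p) = 1"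
      using that unfolding paths_def by blast+
    moreover have "{j. j < 2 * n + 1 \<and> ?\<Phi> (rotate j p)}
                     = {j. j < length p \<and> P (p ! j) \<and> low_steps P (rotate j p) = k}"
      using calculation by (auto simp: hd_rotate_less)
    ultimately show ?thesis
      using that assms card_rotations_low_steps_eq[of p k P] by simp
  qed
  ultimately have "card T = card (paths n)"
    unfolding T_def by (subst card_SigmaI) auto
  also have "card T = card ({q \<in> paths n. ?\<Phi> q} \<times> {..<2 * n + 1})"
    unfolding T_def by (rule bij_betw_same_card[OF bij_betw_rotate_pairs])
  finally show ?thesis
    by (simp add: card_cartesian_product)
qed

lemma card_low_steps_hd:
  assumes "\<forall>p \<in> paths n. card {r. r < 2 * n + 1 \<and> P (p ! r)} = m" "k \<in> {1..m}"
  shows "real (card {q \<in> paths n. P (hd q) \<and> low_steps P q = k})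
           = real ((2 * n + 1) choose n) / real (2 * n + 1)"
  using card_low_steps_hd_mult_length[OF assms] by (simp add: card_paths field_simps flip: of_nat_mult)

lemma binomial_odd_div_eq_up:
  "real ((2 * n + 1) choose n) / real (2 * n + 1) = real ((2 * n) choose n) / real (n + 1)"
  using Suc_times_binomial_eq[of "2 * n" n] binomial_symmetric[of n "2 * n + 1"]
  by (simp add: field_simps flip: of_nat_mult)

lemma binomial_odd_div_eq_down:
  "1 \<le> n \<Longrightarrow>
    real ((2 * n + 1) choose n) / real (2 * n + 1) = real ((2 * n) choose (n - 1)) / real n"
  using Suc_times_binomial_eq[of "2 * n" "n - 1"]
  by (simp add: field_simps flip: of_nat_mult)

theorem theorem5:
  fixes n :: nat
  assumes "n \<ge> 1"
  shows "(\<forall>k\<in>{1..n+1}. real (card {p \<in> paths n. hd p \<and> low_ups p = k})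
            = real ((2*n) choose n) / real (n+1))
       \<and> (\<forall>k\<in>{1..n}. real (card {p \<in> paths n. \<not> hd p \<and> low_downs p = k})
            = real ((2*n) choose (n-1)) / real n)
       \<and> (\<forall>k\<in>{1..2*n+1}. real (card {p \<in> paths n. low_vertices p = k})
            = real ((2*n+1) choose n) / real (2*n+1))"
proof (intro conjI ballI)
  fix k
  assume "k \<in> {1..n+1}"
  with card_ups_path have "real (card {p \<in> paths n. hd p \<and> low_ups p = k})
      = real ((2*n+1) choose n) / real (2*n+1)"
    using card_low_steps_hd[of n "\<lambda>b. b" "n + 1" k] by (simp add: low_ups_eq)
  also have "\<dots> = real ((2*n) choose n) / real (n+1)"
    by (rule binomial_odd_div_eq_up)
  finally show "real (card {p \<in> paths n. hd p \<and> low_ups p = k})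
      = real ((2*n) choose n) / real (n+1)" .
next
  fix k
  assume "k \<in> {1..n}"
  with card_downs_path have "real (card {p \<in> paths n. \<not> hd p \<and> low_downs p = k})
      = real ((2*n+1) choose n) / real (2*n+1)"
    using card_low_steps_hd[of n Not n k] by (simp add: low_downs_eq)
  also have "\<dots> = real ((2*n) choose (n-1)) / real n"
    using assms by (rule binomial_odd_div_eq_down)
  finally show "real (card {p \<in> paths n. \<not> hd p \<and> low_downs p = k})
      = real ((2*n) choose (n-1)) / real n" .
next
  fix k
  assume "k \<in> {1..2*n+1}"
  then show "real (card {p \<in> paths n. low_vertices p = k})
      = real ((2*n+1) choose n) / real (2*n+1)"
    using card_low_steps_hd[of n "\<lambda>_. True" "2 * n + 1" k] by (simp add: low_vertices_eq)
qed

end
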